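(* Let $\mu>0$ and $x_m\ge 0$. Let $g:[0,+\infty)\to(0,+\infty)$ be continuous and strictly decreasing with $g(+\infty)=0$, and let $\beta:[x_m,+\infty)\to[0,+\infty)$ be globally Lipschitz with $\beta(x)>0$ for almost every $x\in[x_0,+\infty)$, for some $x_0\ge x_m$ ($\beta$ is not assumed to be monotone). For $b\ge 0$ define $$R(b):=\int_0^\infty \beta\left( x_m + \int_0^a g\left( \frac{e^{-\mu\tau}}{\mu}b\right) d\tau \right) e^{-\mu a}\,da, \qquad F(b):=bR(b).$$ Then $F$ is strictly increasing on $[0,+\infty)$.
   Context: $F(b)$ coincides with the value of the functional $\phi\mapsto\int_0^\infty \beta\left( x_m + \int_0^a g\left( e^{-\mu(\tau -a)} \int_a^\infty e^{-\mu s} \phi(-s)\,ds \right) d\tau \right) e^{-\mu a} \phi(-a)\,da$ evaluated at the constant function $\phi\equiv b$; this functional defines the renewal equation $b(t)=\int_0^\infty \beta\left( x_m + \int_0^a g\left( e^{-\mu(\tau -a)} \int_a^\infty e^{-\mu s} b(t-s)\,ds \right) d\tau \right) e^{-\mu a} b(t-a)\,da$ modelling tree population birth rate, with $g$ the growth rate, $\beta$ the per capita reproduction rate, $\mu$ the death rate. *)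

theory Defs
  imports "HOL-Analysis.Analysis"
begin

definition R_fun :: "real \<Rightarrow> real \<Rightarrow> (real \<Rightarrow> real) \<Rightarrow> (real \<Rightarrow> real) \<Rightarrow> real \<Rightarrow> real" where
  "R_fun \<mu> x\<^sub>m g \<beta> b =
     (\<integral>a\<in>{0..}. \<beta> (x\<^sub>m + (\<integral>\<tau>\<in>{0..a}. g (exp (- \<mu> * \<tau>) / \<mu> * b) \<partial>lborel))
                   * exp (- \<mu> * a) \<partial>lborel)"

definition F_fun :: "real \<Rightarrow> real \<Rightarrow> (real \<Rightarrow> real) \<Rightarrow> (real \<Rightarrow> real) \<Rightarrow> real \<Rightarrow> real" where
  "F_fun \<mu> x\<^sub>m g \<beta> b = b * R_fun \<mu> x\<^sub>m g \<beta> b"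

end

theory Submission
  imports Defs "HOL-Probability.Sinc_Integral"
begin

(* For a constant birth rate b, an individual of age t feels the competition pressure
   p_b(t) = b exp(-mu t) / mu, grows at rate g(p_b(t)), and has size x_m + Z_b(a) at age a, where
   Z_b(a) = int_0^a g(p_b).  Z_b maps [0, oo) increasingly onto itself, and the substitution
   z = Z_b(a) gives F(b) = int_0^oo beta(x_m + z) n_b(z) dz with the size density
   n_b(z) = mu p / g(p), p = p_b(Z_b^-1(z)).
   If exp(mu c) = b2 / b1 then p_b2(c + t) = p_b1(t), so Z_b2(c + a) = Z_b2(c) + Z_b1(a) > Z_b1(a):
   a b2-individual reaches size z before age c + Z_b1^-1(z), i.e. under a larger pressure.  Since
   p / g(p) is strictly increasing, n_b(z) is strictly increasing in b; as beta >= 0 and beta > 0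
   a.e. on a half-line, F is strictly increasing as well.  The Lipschitz bound on beta only serves
   integrability. *)

lemma AE_lborel_translate:
  fixes c :: "'a::euclidean_space"
  assumes "AE x in lborel. P x"
  shows "AE x in lborel. P (c + x)"
proof -
  obtain N where N: "{x. \<not> P x} \<subseteq> N" "N \<in> null_sets lborel"
    using assms by (rule AE_E) (auto simp: null_sets_def)
  have "{x. x - (- c) \<in> N} \<in> null_sets lborel"
    using N(2) by (rule null_sets_translation)
  then show ?thesis
    by (rule AE_I') (use N(1) in \<open>auto simp: algebra_simps\<close>)
qed

lemma set_integral_Ioi_pos:
  fixes f :: "real \<Rightarrow> real"
  assumes int: "set_integrable lborel {0<..} f"
    and nonneg: "\<And>x. 0 < x \<Longrightarrow> 0 \<le> f x"
    and tail: "AE x in lborel. c < x \<longrightarrow> 0 < f x"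
  shows "0 < (LINT x:{0<..}|lborel. f x)"
proof -
  let ?d = "max c 0 + 1"
  have "(LINT x:{0<..}|lborel. f x) \<noteq> 0"
  proof
    assume "(LINT x:{0<..}|lborel. f x) = 0"
    then have "AE x in lborel. indicator {0<..} x * f x = 0"
      using int nonneg unfolding set_integrable_def set_lebesgue_integral_def
      by (subst integral_nonneg_eq_0_iff_AE[symmetric]) (auto simp: indicator_def)
    then have "AE x in lborel. x \<notin> {?d..?d + 1}"
      using tail by eventually_elim (auto simp: indicator_def)
    then have "emeasure lborel {?d..?d + 1} = 0"
      by (subst (asm) AE_iff_measurable[of "{?d..?d + 1}"]) auto
    then show False by simp
  qed
  moreover have "0 \<le> (LINT x:{0<..}|lborel. f x)"
    unfolding set_lebesgue_integral_def using nonneg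
    by (intro integral_nonneg_AE AE_I2) (auto simp: indicator_def)
  ultimately show ?thesis by linarith
qed

lemma set_integral_substitution_Ioi:
  fixes f Z Z' :: "real \<Rightarrow> real"
  assumes "\<And>x. 0 < x \<Longrightarrow> (Z has_real_derivative Z' x) (at x)"
    and "\<And>x. 0 < x \<Longrightarrow> isCont Z' x"
    and "\<And>x. 0 \<le> x \<Longrightarrow> 0 \<le> Z' x"
    and "\<And>x. 0 < x \<Longrightarrow> isCont f (Z x)"
    and "\<And>x. 0 < x \<Longrightarrow> 0 \<le> f (Z x)"
    and lim_0: "(Z \<longlongrightarrow> 0) (at_right 0)"
    and lim_top: "filterlim Z at_top at_top"
    and "set_integrable lborel {0<..} (\<lambda>x. f (Z x) * Z' x)"
  shows "set_integrable lborel {0<..} f"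
    and "(LINT z:{0<..}|lborel. f z) = (LINT x:{0<..}|lborel. f (Z x) * Z' x)"
proof -
  have Ioi: "einterval 0 \<infinity> = {0::real<..}"
    by (auto simp: einterval_iff zero_ereal_def)
  have "((ereal \<circ> Z \<circ> real_of_ereal) \<longlongrightarrow> 0) (at_right 0)"
    using lim_0 by (simp add: zero_ereal_def ereal_tendsto_simps o_assoc[symmetric])
  moreover have "((ereal \<circ> Z \<circ> real_of_ereal) \<longlongrightarrow> \<infinity>) (at_left \<infinity>)"
  proof -
    have "LIM x at_left \<infinity>. Z (real_of_ereal x) :> at_top"
      unfolding at_left_PInf filterlim_filtermap using lim_top by (simp add: o_def)
    then show ?thesis
      by (subst o_assoc[symmetric], subst ereal_tendsto_simps2(2)) (simp add: o_def)
  qed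
  ultimately have "set_integrable lborel (einterval 0 \<infinity>) f \<and>
      (LBINT z=0..\<infinity>. f z) = (LBINT x=0..\<infinity>. f (Z x) * Z' x)"
    using interval_integral_substitution_nonneg[of 0 \<infinity> Z Z' f 0 \<infinity>] assms Ioi
    by (auto simp: zero_ereal_def)
  then show "set_integrable lborel {0<..} f"
    and "(LINT z:{0<..}|lborel. f z) = (LINT x:{0<..}|lborel. f (Z x) * Z' x)"
    by (simp_all add: Ioi zero_ereal_def interval_integral_to_infinity_eq)
qed

lemma lipschitz_on_Ici_bound:
  fixes f :: "real \<Rightarrow> real"
  assumes "L-lipschitz_on {a..} f" "a \<le> x"
  shows "\<bar>f x\<bar> \<le> \<bar>f a\<bar> + L * (x - a)"
  using lipschitz_onD[OF assms(1), of x a] assms(2) by (auto simp: dist_real_def)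

lemma isCont_if_lipschitz_on_Ici:
  fixes f :: "real \<Rightarrow> real"
  assumes "L-lipschitz_on {a..} f" "a < x"
  shows "isCont f x"
  using continuous_on_interior[OF lipschitz_on_continuous_on[OF assms(1)], of x] assms(2) by simp

lemma set_integrable_affine_times_exp:
  fixes \<mu> A B :: real
  assumes "0 < \<mu>"
  shows "set_integrable lborel {0<..} (\<lambda>x. (A + B * x) * exp (- \<mu> * x))"
proof (rule set_integrable_bound)
  let ?K = "\<bar>A\<bar> + \<bar>B\<bar> * (2 / \<mu>)"
  show "set_integrable lborel {0<..} (\<lambda>x. ?K * exp (- (x * (\<mu> / 2))))"
    using assms by (intro set_integrable_mult_right integrable_I0i_exp_mscale) auto
  show "set_borel_measurable lborel {0<..} (\<lambda>x. (A + B * x) * exp (- \<mu> * x))"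
    unfolding set_borel_measurable_def by measurable
  show "AE x in lborel. x \<in> {0<..} \<longrightarrow>
      norm ((A + B * x) * exp (- \<mu> * x)) \<le> norm (?K * exp (- (x * (\<mu> / 2))))"
  proof (intro AE_I2 impI)
    fix x :: real assume "x \<in> {0<..}"
    let ?e = "exp (- (x * (\<mu> / 2)))"
    have "\<mu> * x / 2 \<le> exp (\<mu> * x / 2)"
      using exp_ge_add_one_self[of "\<mu> * x / 2"] by linarith
    then have "x * ?e \<le> 2 / \<mu>"
      using assms by (simp add: exp_minus field_simps)
    have "\<bar>A + B * x\<bar> * ?e \<le> (\<bar>A\<bar> + \<bar>B\<bar> * x) * ?e"
      using \<open>x \<in> {0<..}\<close> abs_triangle_ineq[of A "B * x"] by (intro mult_right_mono) (auto simp: abs_mult)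
    also have "\<dots> = \<bar>A\<bar> * ?e + \<bar>B\<bar> * (x * ?e)"
      by (simp add: algebra_simps)
    also have "\<dots> \<le> ?K"
      using assms \<open>x \<in> {0<..}\<close> \<open>x * ?e \<le> 2 / \<mu>\<close>
      by (intro add_mono mult_left_mono) (auto intro: mult_left_le)
    finally have "\<bar>A + B * x\<bar> * ?e * ?e \<le> ?K * ?e"
      by (simp add: mult_right_mono)
    moreover have "exp (- \<mu> * x) = ?e * ?e"
      by (simp flip: exp_add)
    ultimately show "norm ((A + B * x) * exp (- \<mu> * x)) \<le> norm (?K * ?e)"
      by (simp add: abs_mult mult.assoc)
  qed
qed

locale growth_kernel =
  fixes \<mu> :: real and g :: "real \<Rightarrow> real"
  assumes mu_pos: "0 < \<mu>"
    and g_cont: "continuous_on {0..} g"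
    and g_pos: "\<And>x. 0 \<le> x \<Longrightarrow> 0 < g x"
    and g_strict_decr: "\<And>x y. 0 \<le> x \<Longrightarrow> x < y \<Longrightarrow> g y < g x"
begin

text \<open>For a constant birth rate \<open>b\<close>, the argument of \<open>g\<close> in the renewal equation,
  \<open>exp (- \<mu> * (\<tau> - a)) * (\<integral>\<^sub>a\<^sup>\<infinity> exp (- \<mu> * s) * b ds)\<close>, equals \<open>pressure b \<tau>\<close>.\<close>

definition pressure :: "real \<Rightarrow> real \<Rightarrow> real" where
  "pressure b \<tau> = exp (- \<mu> * \<tau>) / \<mu> * b"

definition growth :: "real \<Rightarrow> real \<Rightarrow> real" where
  "growth b \<tau> = g (pressure b \<tau>)"

definition size_at :: "real \<Rightarrow> real \<Rightarrow> real" where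
  "size_at b a = integral {0..a} (growth b)"

definition age_at :: "real \<Rightarrow> real \<Rightarrow> real" where
  "age_at b = inv_into {0..} (size_at b)"

definition size_density :: "real \<Rightarrow> real \<Rightarrow> real" where
  "size_density b z = \<mu> * pressure b (age_at b z) / growth b (age_at b z)"

lemma g_mono: "0 \<le> x \<Longrightarrow> x \<le> y \<Longrightarrow> g y \<le> g x"
  using g_strict_decr[of x y] by (cases "x = y") auto

lemma pressure_nonneg: "0 \<le> b \<Longrightarrow> 0 \<le> pressure b \<tau>"
  unfolding pressure_def using mu_pos by simp

lemma pressure_le: "0 \<le> b \<Longrightarrow> 0 \<le> \<tau> \<Longrightarrow> pressure b \<tau> \<le> b / \<mu>"
  unfolding pressure_def using mu_pos
  by (simp add: divide_right_mono mult_left_le_one_le)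

lemma pressure_strict_antimono: "0 < b \<Longrightarrow> x < y \<Longrightarrow> pressure b y < pressure b x"
  unfolding pressure_def using mu_pos by (simp add: divide_strict_right_mono)

lemma pressure_shift:
  assumes "0 < b\<^sub>1" "exp (\<mu> * c) = b\<^sub>2 / b\<^sub>1"
  shows "pressure b\<^sub>2 (c + \<tau>) = pressure b\<^sub>1 \<tau>"
proof -
  have "exp (- \<mu> * (c + \<tau>)) = exp (- \<mu> * \<tau>) / exp (\<mu> * c)"
    by (simp add: exp_diff[symmetric] algebra_simps)
  moreover have "b\<^sub>2 \<noteq> 0"
    using assms exp_gt_zero[of "\<mu> * c"] by auto
  ultimately show ?thesis
    using assms unfolding pressure_def by simp
qed

lemma growth_pos: "0 \<le> b \<Longrightarrow> 0 < growth b \<tau>"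
  unfolding growth_def by (intro g_pos pressure_nonneg)

lemma growth_ge: "0 \<le> b \<Longrightarrow> 0 \<le> \<tau> \<Longrightarrow> g (b / \<mu>) \<le> growth b \<tau>"
  unfolding growth_def by (intro g_mono pressure_nonneg pressure_le)

lemma growth_le: "0 \<le> b \<Longrightarrow> growth b \<tau> \<le> g 0"
  unfolding growth_def by (intro g_mono pressure_nonneg) simp

lemma isCont_pressure: "isCont (pressure b) \<tau>"
  unfolding pressure_def using mu_pos by (intro continuous_intros) simp

lemma isCont_growth: "0 < b \<Longrightarrow> isCont (growth b) \<tau>"
proof -
  assume "0 < b"
  then have "isCont g (pressure b \<tau>)"
    using continuous_on_interior[OF g_cont] mu_pos by (simp add: pressure_def)
  with isCont_pressure show ?thesis
    unfolding growth_def by (rule isCont_o2)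
qed

lemma growth_integrable_on: "0 < b \<Longrightarrow> growth b integrable_on {x..y}"
  by (intro integrable_continuous_real continuous_at_imp_continuous_on ballI isCont_growth)

lemma integral_growth_ge:
  "0 < b \<Longrightarrow> 0 \<le> x \<Longrightarrow> x \<le> y \<Longrightarrow> (y - x) * g (b / \<mu>) \<le> integral {x..y} (growth b)"
  using integral_le[of "\<lambda>_. g (b / \<mu>)" "{x..y}" "growth b"] growth_integrable_on[of b x y]
    growth_ge[of b]
  by auto

lemma size_at_0 [simp]: "size_at b 0 = 0"
  by (simp add: size_at_def)

lemma size_at_ge: "0 < b \<Longrightarrow> 0 \<le> a \<Longrightarrow> a * g (b / \<mu>) \<le> size_at b a"
  unfolding size_at_def using integral_growth_ge[of b 0 a] by simp

lemma size_at_le: "0 < b \<Longrightarrow> 0 \<le> a \<Longrightarrow> size_at b a \<le> a * g 0"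
  unfolding size_at_def
  using integral_le[of "growth b" "{0..a}" "\<lambda>_. g 0"] growth_integrable_on[of b 0 a] growth_le[of b]
  by auto

lemma size_at_combine:
  "0 < b \<Longrightarrow> 0 \<le> x \<Longrightarrow> x \<le> y \<Longrightarrow> size_at b y = size_at b x + integral {x..y} (growth b)"
  unfolding size_at_def by (simp add: Henstock_Kurzweil_Integration.integral_combine growth_integrable_on)

lemma size_at_strict_mono: "0 < b \<Longrightarrow> strict_mono_on {0..} (size_at b)"
proof (rule strict_mono_onI)
  fix x y :: real assume "0 < b" "x \<in> {0..}" "x < y"
  moreover have "0 < (y - x) * g (b / \<mu>)"
    using \<open>0 < b\<close> \<open>x < y\<close> mu_pos by (simp add: g_pos)
  ultimately show "size_at b x < size_at b y"
    using size_at_combine[of b x y] integral_growth_ge[of b x y] by simp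
qed

lemma size_at_pos: "0 < b \<Longrightarrow> 0 < a \<Longrightarrow> 0 < size_at b a"
  using strict_mono_onD[OF size_at_strict_mono, of b 0 a] by simp

lemma has_real_derivative_size_at:
  assumes "0 < b" "0 < a"
  shows "(size_at b has_real_derivative growth b a) (at a)"
proof -
  have "(size_at b has_real_derivative growth b a) (at a within {0..a + 1})"
    unfolding size_at_def using assms
    by (intro integral_has_real_derivative continuous_at_imp_continuous_on ballI isCont_growth) auto
  moreover have "at a within {0..a + 1} = at a"
    using assms by (intro at_within_interior) auto
  ultimately show ?thesis by simp
qed

lemma isCont_size_at: "0 < b \<Longrightarrow> 0 < a \<Longrightarrow> isCont (size_at b) a"
  using has_real_derivative_size_at DERIV_isCont by blast

lemma size_at_tendsto_0: "0 < b \<Longrightarrow> (size_at b \<longlongrightarrow> 0) (at_right 0)"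
proof (rule real_tendsto_sandwich[OF _ _ tendsto_const])
  assume "0 < b"
  show "\<forall>\<^sub>F a in at_right 0. 0 \<le> size_at b a"
    using eventually_at_right_less[of 0]
    by eventually_elim (use \<open>0 < b\<close> in \<open>auto intro: less_imp_le size_at_pos\<close>)
  show "\<forall>\<^sub>F a in at_right 0. size_at b a \<le> a * g 0"
    using eventually_at_right_less[of 0]
    by eventually_elim (use \<open>0 < b\<close> in \<open>auto intro: size_at_le\<close>)
  show "((\<lambda>a. a * g 0) \<longlongrightarrow> 0) (at_right 0)"
    by (rule tendsto_eq_intros | simp)+
qed

lemma filterlim_size_at_at_top: "0 < b \<Longrightarrow> filterlim (size_at b) at_top at_top"
proof (rule filterlim_at_top_mono)
  assume "0 < b"
  then show "filterlim (\<lambda>a. a * g (b / \<mu>)) at_top at_top"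
    using mu_pos g_pos
    by (intro filterlim_at_top_mult_tendsto_pos[OF tendsto_const] filterlim_ident) auto
  show "\<forall>\<^sub>F a in at_top. a * g (b / \<mu>) \<le> size_at b a"
    using eventually_ge_at_top[of 0] by eventually_elim (use \<open>0 < b\<close> in \<open>rule size_at_ge\<close>)
qed

lemma continuous_on_size_at: "0 < b \<Longrightarrow> continuous_on {0..a} (size_at b)"
  unfolding size_at_def by (intro indefinite_integral_continuous_1 growth_integrable_on)

lemma size_at_shift:
  assumes b\<^sub>1: "0 < b\<^sub>1" and c: "exp (\<mu> * c) = b\<^sub>2 / b\<^sub>1" "0 \<le> c" and "0 \<le> a"
  shows "size_at b\<^sub>2 (c + a) = size_at b\<^sub>2 c + size_at b\<^sub>1 a"
proof -
  have "0 < b\<^sub>2"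
    using b\<^sub>1 exp_gt_zero[of "\<mu> * c"] by (simp add: c zero_less_divide_iff)
  then have "size_at b\<^sub>2 (c + a) = size_at b\<^sub>2 c + integral {c..c + a} (growth b\<^sub>2)"
    using assms by (intro size_at_combine) auto
  also have "integral {c..c + a} (growth b\<^sub>2) = integral {0..a} (growth b\<^sub>2 \<circ> (+) c)"
    using integral_shift_Icc_real[of 0 a "growth b\<^sub>2" c] by (simp add: add.commute)
  also have "growth b\<^sub>2 \<circ> (+) c = growth b\<^sub>1"
    by (auto simp: growth_def pressure_shift[OF b\<^sub>1 c(1)])
  finally show ?thesis
    by (simp add: size_at_def)
qed

lemma age_at_size_at: "0 < b \<Longrightarrow> 0 \<le> a \<Longrightarrow> age_at b (size_at b a) = a"
  unfolding age_at_def by (simp add: inv_into_f_f strict_mono_on_imp_inj_on size_at_strict_mono)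

lemma size_at_age_at:
  assumes "0 < b" "0 < z"
  shows "size_at b (age_at b z) = z" and "0 < age_at b z"
proof -
  define T where "T = z / g (b / \<mu>)"
  have "0 < g (b / \<mu>)"
    using assms mu_pos by (intro g_pos) simp
  then have "0 \<le> T" "z \<le> size_at b T"
    using size_at_ge[of b T] assms unfolding T_def by auto
  then obtain a where a: "0 \<le> a" "size_at b a = z"
    using IVT'[of "size_at b" 0 z T] continuous_on_size_at[OF \<open>0 < b\<close>] \<open>0 < z\<close> by auto
  then have "age_at b z = a"
    using age_at_size_at[OF \<open>0 < b\<close>] by blast
  with a \<open>0 < z\<close> show "size_at b (age_at b z) = z" and "0 < age_at b z"
    by (auto simp: order_le_less)
qed

lemma isCont_age_at:
  assumes "0 < b" "0 < a"
  shows "isCont (age_at b) (size_at b a)"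
proof (rule isCont_inverse_function[where f = "size_at b" and x = a and d = "a / 2"])
  show "0 < a / 2"
    using assms by simp
next
  fix x assume "\<bar>x - a\<bar> \<le> a / 2"
  with assms have "0 < x"
    by arith
  with assms show "age_at b (size_at b x) = x"
    by (simp add: age_at_size_at)
next
  fix x assume "\<bar>x - a\<bar> \<le> a / 2"
  with assms have "0 < x"
    by arith
  with assms show "isCont (size_at b) x"
    by (simp add: isCont_size_at)
qed

lemma size_density_nonneg: "0 \<le> b \<Longrightarrow> 0 \<le> size_density b z"
  unfolding size_density_def
  by (intro divide_nonneg_pos mult_nonneg_nonneg less_imp_le[OF mu_pos] pressure_nonneg growth_pos)

lemma size_density_size_at:
  "0 < b \<Longrightarrow> 0 \<le> a \<Longrightarrow> size_density b (size_at b a) * growth b a = b * exp (- \<mu> * a)"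
  unfolding size_density_def using mu_pos growth_pos[of b a]
  by (simp add: age_at_size_at pressure_def)

lemma isCont_size_density:
  assumes "0 < b" "0 < a"
  shows "isCont (size_density b) (size_at b a)"
proof -
  have age: "isCont (age_at b) (size_at b a)"
    using isCont_age_at[OF assms] .
  have "isCont (\<lambda>z. pressure b (age_at b z)) (size_at b a)"
    using age isCont_pressure by (rule isCont_o2)
  moreover have "isCont (\<lambda>z. growth b (age_at b z)) (size_at b a)"
    using age isCont_growth[OF \<open>0 < b\<close>] by (rule isCont_o2)
  moreover have "growth b (age_at b (size_at b a)) \<noteq> 0"
    using growth_pos[of b] \<open>0 < b\<close> by (simp add: less_imp_neq[symmetric])
  ultimately show ?thesis
    unfolding size_density_def by (intro continuous_intros)
qed

lemma div_g_less: "0 \<le> x \<Longrightarrow> x < y \<Longrightarrow> x / g x < y / g y"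
proof -
  assume "0 \<le> x" "x < y"
  then have "x / g x \<le> x / g y"
    using g_pos g_mono by (intro divide_left_mono) (auto intro: mult_pos_pos)
  also have "\<dots> < y / g y"
    using \<open>0 \<le> x\<close> \<open>x < y\<close> g_pos by (intro divide_strict_right_mono) auto
  finally show ?thesis .
qed

lemma pressure_age_at_less:
  assumes b: "0 < b\<^sub>1" "b\<^sub>1 < b\<^sub>2" and "0 < z"
  shows "pressure b\<^sub>1 (age_at b\<^sub>1 z) < pressure b\<^sub>2 (age_at b\<^sub>2 z)"
proof -
  define c where "c = ln (b\<^sub>2 / b\<^sub>1) / \<mu>"
  have c: "exp (\<mu> * c) = b\<^sub>2 / b\<^sub>1" "0 < c"
    unfolding c_def using mu_pos b by simp_all
  have "0 < b\<^sub>2"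
    using b by simp
  let ?A\<^sub>1 = "age_at b\<^sub>1 z" and ?A\<^sub>2 = "age_at b\<^sub>2 z"
  have "size_at b\<^sub>2 ?A\<^sub>2 = size_at b\<^sub>1 ?A\<^sub>1"
    using size_at_age_at b \<open>0 < b\<^sub>2\<close> \<open>0 < z\<close> by simp
  also have "\<dots> < size_at b\<^sub>2 c + size_at b\<^sub>1 ?A\<^sub>1"
    using size_at_pos[OF \<open>0 < b\<^sub>2\<close> \<open>0 < c\<close>] by simp
  also have "\<dots> = size_at b\<^sub>2 (c + ?A\<^sub>1)"
    using size_at_shift[OF b(1) c(1)] size_at_age_at(2)[OF b(1) \<open>0 < z\<close>] \<open>0 < c\<close> by simp
  finally have "?A\<^sub>2 < c + ?A\<^sub>1"
    using strict_mono_on_less[OF size_at_strict_mono[OF \<open>0 < b\<^sub>2\<close>]]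
      size_at_age_at(2)[OF b(1) \<open>0 < z\<close>] size_at_age_at(2)[OF \<open>0 < b\<^sub>2\<close> \<open>0 < z\<close>] \<open>0 < c\<close>
    by simp
  then have "pressure b\<^sub>2 (c + ?A\<^sub>1) < pressure b\<^sub>2 ?A\<^sub>2"
    by (rule pressure_strict_antimono[OF \<open>0 < b\<^sub>2\<close>])
  then show ?thesis
    by (simp add: pressure_shift[OF b(1) c(1)])
qed

lemma size_density_strict_mono:
  assumes "0 \<le> b\<^sub>1" "b\<^sub>1 < b\<^sub>2" "0 < z"
  shows "size_density b\<^sub>1 z < size_density b\<^sub>2 z"
proof -
  have "pressure b\<^sub>1 (age_at b\<^sub>1 z) < pressure b\<^sub>2 (age_at b\<^sub>2 z)"
  proof (cases "b\<^sub>1 = 0")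
    case True
    then show ?thesis
      using assms mu_pos by (simp add: pressure_def)
  next
    case False
    then show ?thesis
      using assms by (intro pressure_age_at_less) auto
  qed
  then have "pressure b\<^sub>1 (age_at b\<^sub>1 z) / g (pressure b\<^sub>1 (age_at b\<^sub>1 z))
      < pressure b\<^sub>2 (age_at b\<^sub>2 z) / g (pressure b\<^sub>2 (age_at b\<^sub>2 z))"
    using pressure_nonneg[OF assms(1)] by (intro div_g_less)
  from mult_strict_left_mono[OF this mu_pos] show ?thesis
    unfolding size_density_def growth_def by simp
qed

lemma R_fun_eq_set_integral:
  assumes "0 < b"
  shows "R_fun \<mu> x\<^sub>m g \<beta> b = (LINT a:{0<..}|lborel. \<beta> (x\<^sub>m + size_at b a) * exp (- \<mu> * a))"
proof -
  have "(\<integral>\<tau>\<in>{0..a}. g (exp (- \<mu> * \<tau>) / \<mu> * b) \<partial>lborel) = size_at b a" for a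
  proof -
    have "set_integrable lborel {0..a} (growth b)"
      using assms by (intro borel_integrable_atLeastAtMost' continuous_at_imp_continuous_on ballI isCont_growth)
    from set_borel_integral_eq_integral(2)[OF this] show ?thesis
      by (simp add: size_at_def growth_def pressure_def)
  qed
  then have "R_fun \<mu> x\<^sub>m g \<beta> b = (LINT a:{0..}|lborel. \<beta> (x\<^sub>m + size_at b a) * exp (- \<mu> * a))"
    unfolding R_fun_def by simp
  also have "\<dots> = (LINT a:{0<..}|lborel. \<beta> (x\<^sub>m + size_at b a) * exp (- \<mu> * a))"
    by (rule set_integral_discrete_difference[where X = "{0}"]) auto
  finally show ?thesis .
qed

lemma set_integrable_birth_integrand:
  assumes lip: "L-lipschitz_on {x\<^sub>m..} \<beta>" and "0 < b"
  shows "set_integrable lborel {0<..} (\<lambda>a. \<beta> (x\<^sub>m + size_at b a) * exp (- \<mu> * a))"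
proof (rule set_integrable_bound)
  show "set_integrable lborel {0<..} (\<lambda>a. (\<bar>\<beta> x\<^sub>m\<bar> + L * g 0 * a) * exp (- \<mu> * a))"
    using mu_pos by (rule set_integrable_affine_times_exp)
  have "isCont (\<lambda>a. \<beta> (x\<^sub>m + size_at b a) * exp (- \<mu> * a)) a" if "0 < a" for a
  proof -
    have "isCont \<beta> (x\<^sub>m + size_at b a)"
      using size_at_pos[OF \<open>0 < b\<close> that] by (intro isCont_if_lipschitz_on_Ici[OF lip]) simp
    with isCont_add[OF continuous_const isCont_size_at[OF \<open>0 < b\<close> that]]
    have "isCont (\<lambda>a. \<beta> (x\<^sub>m + size_at b a)) a"
      by (rule isCont_o2)
    then show ?thesis
      by (rule isCont_mult) (intro continuous_intros)
  qed
  then have "set_borel_measurable borel {0<..} (\<lambda>a. \<beta> (x\<^sub>m + size_at b a) * exp (- \<mu> * a))"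
    by (intro set_measurable_continuous_on continuous_at_imp_continuous_on ballI) auto
  then show "set_borel_measurable lborel {0<..} (\<lambda>a. \<beta> (x\<^sub>m + size_at b a) * exp (- \<mu> * a))"
    by (simp add: set_borel_measurable_def)
  show "AE a in lborel. a \<in> {0<..} \<longrightarrow> norm (\<beta> (x\<^sub>m + size_at b a) * exp (- \<mu> * a))
      \<le> norm ((\<bar>\<beta> x\<^sub>m\<bar> + L * g 0 * a) * exp (- \<mu> * a))"
  proof (intro AE_I2 impI)
    fix a :: real assume "a \<in> {0<..}"
    then have "0 \<le> size_at b a" "size_at b a \<le> a * g 0"
      using size_at_pos[OF \<open>0 < b\<close>, of a] size_at_le[OF \<open>0 < b\<close>, of a] by auto
    moreover note mult_left_mono[OF this(2) lipschitz_on_nonneg[OF lip]]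
    ultimately have "\<bar>\<beta> (x\<^sub>m + size_at b a)\<bar> \<le> \<bar>\<beta> x\<^sub>m\<bar> + L * g 0 * a"
      using lipschitz_on_Ici_bound[OF lip, of "x\<^sub>m + size_at b a"] by (simp add: mult_ac)
    then show "norm (\<beta> (x\<^sub>m + size_at b a) * exp (- \<mu> * a))
        \<le> norm ((\<bar>\<beta> x\<^sub>m\<bar> + L * g 0 * a) * exp (- \<mu> * a))"
      by (simp add: abs_mult mult_right_mono)
  qed
qed

lemma F_fun_eq_size_integral:
  assumes lip: "L-lipschitz_on {x\<^sub>m..} \<beta>" and nonneg: "\<And>x. x\<^sub>m \<le> x \<Longrightarrow> 0 \<le> \<beta> x"
    and "0 \<le> b"
  shows "set_integrable lborel {0<..} (\<lambda>z. \<beta> (x\<^sub>m + z) * size_density b z)"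
    and "F_fun \<mu> x\<^sub>m g \<beta> b = (LINT z:{0<..}|lborel. \<beta> (x\<^sub>m + z) * size_density b z)"
proof -
  let ?f = "\<lambda>z. \<beta> (x\<^sub>m + z) * size_density b z"
  consider "b = 0" | "0 < b"
    using \<open>0 \<le> b\<close> by linarith
  then have "set_integrable lborel {0<..} ?f \<and> F_fun \<mu> x\<^sub>m g \<beta> b = (LINT z:{0<..}|lborel. ?f z)"
  proof cases
    case 1
    then show ?thesis
      by (simp add: F_fun_def size_density_def pressure_def set_integrable_def)
  next
    case 2
    have birth: "?f (size_at b a) * growth b a = b * (\<beta> (x\<^sub>m + size_at b a) * exp (- \<mu> * a))"
      if "a \<in> {0<..}" for a
      using size_density_size_at[OF \<open>0 < b\<close>, of a] that by (simp add: mult_ac)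
    have int: "set_integrable lborel {0<..} (\<lambda>a. ?f (size_at b a) * growth b a)"
      using set_integrable_birth_integrand[OF lip \<open>0 < b\<close>]
      by (subst set_integrable_cong[OF refl refl birth]) auto
    have cont: "isCont ?f (size_at b a)" if "0 < a" for a
    proof -
      have "isCont \<beta> (x\<^sub>m + size_at b a)"
        using size_at_pos[OF \<open>0 < b\<close> that] by (intro isCont_if_lipschitz_on_Ici[OF lip]) simp
      with isCont_add[OF continuous_const continuous_ident]
      have "isCont (\<lambda>z. \<beta> (x\<^sub>m + z)) (size_at b a)"
        by (rule isCont_o2)
      then show ?thesis
        using isCont_size_density[OF \<open>0 < b\<close> that] by (rule isCont_mult)
    qed
    have nonneg_f: "0 \<le> ?f (size_at b a)" if "0 < a" for a
      using size_at_pos[OF \<open>0 < b\<close> that] nonneg[of "x\<^sub>m + size_at b a"]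
        size_density_nonneg[OF \<open>0 \<le> b\<close>] by simp
    note subst = set_integral_substitution_Ioi[of "size_at b" "growth b" ?f,
        OF has_real_derivative_size_at[OF \<open>0 < b\<close>] isCont_growth[OF \<open>0 < b\<close>]
        less_imp_le[OF growth_pos[OF \<open>0 \<le> b\<close>]] cont nonneg_f size_at_tendsto_0[OF \<open>0 < b\<close>] filterlim_size_at_at_top[OF \<open>0 < b\<close>] int]
    have "F_fun \<mu> x\<^sub>m g \<beta> b = (LINT a:{0<..}|lborel. b * (\<beta> (x\<^sub>m + size_at b a) * exp (- \<mu> * a)))"
      unfolding F_fun_def R_fun_eq_set_integral[OF \<open>0 < b\<close>] by simp
    also have "\<dots> = (LINT a:{0<..}|lborel. ?f (size_at b a) * growth b a)"
      by (intro set_lebesgue_integral_cong) (auto simp: birth)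
    finally show ?thesis
      using subst by simp
  qed
  then show "set_integrable lborel {0<..} ?f" and "F_fun \<mu> x\<^sub>m g \<beta> b = (LINT z:{0<..}|lborel. ?f z)"
    by auto
qed


lemma strict_mono_on_F_fun:
  assumes lip: "L-lipschitz_on {x\<^sub>m..} \<beta>" and nonneg: "\<And>x. x\<^sub>m \<le> x \<Longrightarrow> 0 \<le> \<beta> x"
    and pos: "AE x in lborel. x\<^sub>0 \<le> x \<longrightarrow> 0 < \<beta> x"
  shows "strict_mono_on {0..} (F_fun \<mu> x\<^sub>m g \<beta>)"
proof (rule strict_mono_onI)
  fix r s :: real assume "r \<in> {0..}" "s \<in> {0..}" "r < s"
  then have gap: "0 < size_density s z - size_density r z" if "0 < z" for z
    using size_density_strict_mono that by simp
  note F = F_fun_eq_size_integral[OF lip nonneg]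
  have "0 < (LINT z:{0<..}|lborel. \<beta> (x\<^sub>m + z) * (size_density s z - size_density r z))"
  proof (rule set_integral_Ioi_pos)
    show "set_integrable lborel {0<..} (\<lambda>z. \<beta> (x\<^sub>m + z) * (size_density s z - size_density r z))"
      using set_integral_diff(1)[OF F(1) F(1)] \<open>r \<in> {0..}\<close> \<open>s \<in> {0..}\<close>
      by (simp add: right_diff_distrib)
    show "0 \<le> \<beta> (x\<^sub>m + z) * (size_density s z - size_density r z)" if "0 < z" for z
      using gap[OF that] nonneg[of "x\<^sub>m + z"] that by simp
    from AE_lborel_translate[OF pos, of x\<^sub>m]
    show "AE z in lborel. max (x\<^sub>0 - x\<^sub>m) 0 < z \<longrightarrow>
        0 < \<beta> (x\<^sub>m + z) * (size_density s z - size_density r z)"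
      by eventually_elim (auto intro: mult_pos_pos gap)
  qed
  also have "\<dots> = F_fun \<mu> x\<^sub>m g \<beta> s - F_fun \<mu> x\<^sub>m g \<beta> r"
    using set_integral_diff(2)[OF F(1) F(1)] F(2) \<open>r \<in> {0..}\<close> \<open>s \<in> {0..}\<close>
    by (simp add: right_diff_distrib)
  finally show "F_fun \<mu> x\<^sub>m g \<beta> r < F_fun \<mu> x\<^sub>m g \<beta> s"
    by simp
qed

end

theorem theorem1:
  fixes \<mu> x\<^sub>m :: real and g \<beta> :: "real \<Rightarrow> real"
  assumes mu_pos: "\<mu> > 0"
    and xm_nonneg: "x\<^sub>m \<ge> 0"
    and g_cont: "continuous_on {0..} g"
    and g_pos: "\<And>x. x \<ge> 0 \<Longrightarrow> g x > 0"
    and g_strict_decr: "\<And>x y. 0 \<le> x \<Longrightarrow> x < y \<Longrightarrow> g y < g x"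
    and g_lim: "(g \<longlongrightarrow> 0) at_top"
    and beta_lip: "\<exists>L. L-lipschitz_on {x\<^sub>m..} \<beta>"
    and beta_nonneg: "\<And>x. x \<ge> x\<^sub>m \<Longrightarrow> \<beta> x \<ge> 0"
    and beta_pos_ae: "\<exists>x\<^sub>0 \<ge> x\<^sub>m. AE x in lborel. x \<ge> x\<^sub>0 \<longrightarrow> \<beta> x > 0"
  shows "strict_mono_on {0..} (F_fun \<mu> x\<^sub>m g \<beta>)"
proof -
  interpret growth_kernel \<mu> g
    using mu_pos g_cont g_pos g_strict_decr by unfold_locales
  obtain L where lip: "L-lipschitz_on {x\<^sub>m..} \<beta>"
    using beta_lip by blast
  obtain x\<^sub>0 where pos: "AE x in lborel. x\<^sub>0 \<le> x \<longrightarrow> 0 < \<beta> x"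
    using beta_pos_ae by blast
  show ?thesis
    by (rule strict_mono_on_F_fun[OF lip beta_nonneg pos])
qed

end
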